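(* Suppose Assumption 1 holds and there is $\eta\in[0,1)$ such that every $d^k$ satisfies the $\eta$-inexactness condition for $Q_k=Q^{x^k}_{H_k}$ ($f$ need not be convex). For Algorithm 1, if $H_k\succeq\sigma I$ for some $\sigma>0$ and all $k$, then for all $k\ge0$ $$\min_{0\le t\le k}|Q_t(d^t)|\le\frac{F(x^0)-F^*}{\gamma(k+1)\min_{0\le t\le k}\alpha_t}\le\frac{F(x^0)-F^*}{\gamma(k+1)}\max\left\{1,\ \frac{(1+\sqrt\eta)L}{2\beta(1-\gamma)\sigma}\right\}.$$ For Algorithm 2 (with $H^0_k\succ0$ for Variant 1), with $Q_t=Q^{x^t}_{H_t}$ for the final $H_t$, $$\min_{0\le t\le k}|Q_t(d^t)|\le\frac{F(x^0)-F^*}{\gamma(k+1)}.$$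
   Context: Problem setting: $F(x)=f(x)+\psi(x)$ on $\mathbb{R}^n$, $F^*=\inf F$. Assumption 1: $f$ is differentiable with $L$-Lipschitz continuous gradient ($L>0$); $\psi:\mathbb{R}^n\to\mathbb{R}\cup\{+\infty\}$ is convex, proper and closed; $F$ is bounded below; the solution set $\Omega=\{x:F(x)=F^*\}$ is nonempty. For $x\in\mathbb{R}^n$ and symmetric $H$, $Q^x_H(d)\coloneqq\nabla f(x)^Td+\frac12d^THd+\psi(x+d)-\psi(x)$, $Q^*=\inf_dQ^x_H(d)$; $d$ satisfies the $\eta$-inexactness condition if $Q^x_H(d)\le(1-\eta)Q^*$. Algorithm 1: given $\beta,\gamma\in(0,1)$, $x^0$, fixed $\eta\in[0,1)$; for $k=0,1,\dots$: choose symmetric $H_k$ with $Q_k\coloneqq Q^{x^k}_{H_k}$ strongly convex; compute $d^k$ satisfying the $\eta$-inexactness condition for $Q_k$; let $\Delta_k=\nabla f(x^k)^Td^k+\psi(x^k+d^k)-\psi(x^k)$; let $\alpha_k=\beta^i$ for the smallest nonnegative integer $i$ with $F(x^k+\alpha_kd^k)\le F(x^k)+\alpha_k\gamma\Delta_k$; set $x^{k+1}=x^k+\alpha_kd^k$. Algorithm 2: given $\beta\in(0,1)$, $\gamma\in(0,1]$, $x^0$, fixed $\eta\in[0,1)$; for each $k$: choose symmetric $H^0_k$ (in Variant 1, $H^0_k\succ0$); set $\alpha_k\leftarrow1$, $H_k\leftarrow H^0_k$, compute $d^k$ satisfying the $\eta$-inexactness condition for $Q^{x^k}_{H_k}$;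 while $F(x^k)-F(x^k+d^k)\ge-\gamma Q^{x^k}_{H_k}(d^k)\ge0$ fails: Variant 1 sets $\alpha_k\leftarrow\beta\alpha_k$, $H_k\leftarrow H^0_k/\alpha_k$; Variant 2 sets $H_k\leftarrow H^0_k+\alpha_k^{-1}I$, then $\alpha_k\leftarrow\beta\alpha_k$; then $d^k$ is recomputed satisfying the $\eta$-inexactness condition. Finally $x^{k+1}=x^k+d^k$; "final $H_k$" is the accepted matrix. *)

theory Defs
  imports "HOL-Analysis.Analysis" "HOL-Library.Extended_Real"
begin

(* Extended-valued functions psi : R^n -> R \<union> {+\<infinity>} are modelled as real^'n \<Rightarrow> ereal. *)

definition ereal_convex :: "(real^'n \<Rightarrow> ereal) \<Rightarrow> bool" where
  "ereal_convex \<phi> \<longleftrightarrow> (\<forall>x y. \<forall>t\<in>{0..1::real}.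
      \<phi> ((1 - t) *\<^sub>R x + t *\<^sub>R y) \<le> ereal (1 - t) * \<phi> x + ereal t * \<phi> y)"

(* strongly convex: \<phi> - (\<mu>/2)\<parallel>.\<parallel>^2 convex for some \<mu> > 0, written out *)
definition ereal_strongly_convex :: "(real^'n \<Rightarrow> ereal) \<Rightarrow> bool" where
  "ereal_strongly_convex \<phi> \<longleftrightarrow> (\<exists>\<mu>>0. \<forall>x y. \<forall>t\<in>{0..1::real}.
      \<phi> ((1 - t) *\<^sub>R x + t *\<^sub>R y)
        \<le> ereal (1 - t) * \<phi> x + ereal t * \<phi> y - ereal (\<mu> / 2 * t * (1 - t) * (norm (x - y))\<^sup>2))"

definition ereal_proper :: "(real^'n \<Rightarrow> ereal) \<Rightarrow> bool" where
  "ereal_proper \<phi> \<longleftrightarrow> (\<forall>x. \<phi> x \<noteq> -\<infinity>) \<and> (\<exists>x. \<phi> x \<noteq> \<infinity>)"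

definition ereal_closed_fun :: "(real^'n \<Rightarrow> ereal) \<Rightarrow> bool" where
  "ereal_closed_fun \<phi> \<longleftrightarrow> closed {p :: (real^'n) \<times> real. \<phi> (fst p) \<le> ereal (snd p)}"

definition sym_mat :: "real^'n^'n \<Rightarrow> bool" where
  "sym_mat H \<longleftrightarrow> transpose H = H"

definition psd_ge :: "real^'n^'n \<Rightarrow> real \<Rightarrow> bool" where
  "psd_ge H \<sigma> \<longleftrightarrow> (\<forall>v. \<sigma> * (v \<bullet> v) \<le> v \<bullet> (H *v v))"

definition pos_def_mat :: "real^'n^'n \<Rightarrow> bool" where
  "pos_def_mat H \<longleftrightarrow> (\<forall>v. v \<noteq> 0 \<longrightarrow> 0 < v \<bullet> (H *v v))"

definition Fobj :: "(real^'n \<Rightarrow> real) \<Rightarrow> (real^'n \<Rightarrow> ereal) \<Rightarrow> real^'n \<Rightarrow> ereal" where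
  "Fobj f \<psi> x = ereal (f x) + \<psi> x"

definition Fstar :: "(real^'n \<Rightarrow> real) \<Rightarrow> (real^'n \<Rightarrow> ereal) \<Rightarrow> ereal" where
  "Fstar f \<psi> = Inf (range (Fobj f \<psi>))"

(* Q^x_H(d); g is the gradient of f *)
definition quadQ :: "(real^'n \<Rightarrow> real^'n) \<Rightarrow> (real^'n \<Rightarrow> ereal) \<Rightarrow> real^'n \<Rightarrow> real^'n^'n \<Rightarrow> real^'n \<Rightarrow> ereal" where
  "quadQ g \<psi> x H d = ereal (g x \<bullet> d + 1/2 * (d \<bullet> (H *v d))) + \<psi> (x + d) - \<psi> x"

definition Qstar :: "(real^'n \<Rightarrow> real^'n) \<Rightarrow> (real^'n \<Rightarrow> ereal) \<Rightarrow> real^'n \<Rightarrow> real^'n^'n \<Rightarrow> ereal" where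
  "Qstar g \<psi> x H = Inf (range (quadQ g \<psi> x H))"

definition inexact :: "real \<Rightarrow> (real^'n \<Rightarrow> real^'n) \<Rightarrow> (real^'n \<Rightarrow> ereal) \<Rightarrow> real^'n \<Rightarrow> real^'n^'n \<Rightarrow> real^'n \<Rightarrow> bool" where
  "inexact \<eta> g \<psi> x H d \<longleftrightarrow> quadQ g \<psi> x H d \<le> ereal (1 - \<eta>) * Qstar g \<psi> x H"

definition Delta :: "(real^'n \<Rightarrow> real^'n) \<Rightarrow> (real^'n \<Rightarrow> ereal) \<Rightarrow> real^'n \<Rightarrow> real^'n \<Rightarrow> ereal" where
  "Delta g \<psi> x d = ereal (g x \<bullet> d) + \<psi> (x + d) - \<psi> x"

definition armijo :: "(real^'n \<Rightarrow> real) \<Rightarrow> (real^'n \<Rightarrow> real^'n) \<Rightarrow> (real^'n \<Rightarrow> ereal) \<Rightarrow> real \<Rightarrow> real^'n \<Rightarrow> real^'n \<Rightarrow> real \<Rightarrow> bool" where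
  "armijo f g \<psi> \<gamma> x d s \<longleftrightarrow> Fobj f \<psi> (x + s *\<^sub>R d) \<le> Fobj f \<psi> x + ereal (s * \<gamma>) * Delta g \<psi> x d"

definition alg1_run :: "(real^'n \<Rightarrow> real) \<Rightarrow> (real^'n \<Rightarrow> real^'n) \<Rightarrow> (real^'n \<Rightarrow> ereal) \<Rightarrow> real \<Rightarrow> real \<Rightarrow> real
     \<Rightarrow> (nat \<Rightarrow> real^'n) \<Rightarrow> (nat \<Rightarrow> real^'n^'n) \<Rightarrow> (nat \<Rightarrow> real^'n) \<Rightarrow> (nat \<Rightarrow> real) \<Rightarrow> bool" where
  "alg1_run f g \<psi> \<beta> \<gamma> \<eta> x H d \<alpha> \<longleftrightarrow>
     0 < \<beta> \<and> \<beta> < 1 \<and> 0 < \<gamma> \<and> \<gamma> < 1 \<and>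
     (\<forall>k. sym_mat (H k) \<and> ereal_strongly_convex (quadQ g \<psi> (x k) (H k))
        \<and> inexact \<eta> g \<psi> (x k) (H k) (d k)
        \<and> (\<exists>i::nat. \<alpha> k = \<beta> ^ i \<and> armijo f g \<psi> \<gamma> (x k) (d k) (\<beta> ^ i)
                 \<and> (\<forall>j<i. \<not> armijo f g \<psi> \<gamma> (x k) (d k) (\<beta> ^ j)))
        \<and> x (Suc k) = x k + \<alpha> k *\<^sub>R d k)"

(* Trial matrix after j rejections in Algorithm 2 (variant v \<in> {1,2}) *)
definition alg2_trialH :: "nat \<Rightarrow> real \<Rightarrow> real^'n^'n \<Rightarrow> nat \<Rightarrow> real^'n^'n" where
  "alg2_trialH v \<beta> H0 j =
     (if v = 1 then (1 / \<beta> ^ j) *\<^sub>R H0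
      else if j = 0 then H0 else H0 + (1 / \<beta> ^ (j - 1)) *\<^sub>R mat 1)"

definition alg2_accept :: "(real^'n \<Rightarrow> real) \<Rightarrow> (real^'n \<Rightarrow> real^'n) \<Rightarrow> (real^'n \<Rightarrow> ereal) \<Rightarrow> real \<Rightarrow> real^'n \<Rightarrow> real^'n^'n \<Rightarrow> real^'n \<Rightarrow> bool" where
  "alg2_accept f g \<psi> \<gamma> x H d \<longleftrightarrow>
     Fobj f \<psi> x - Fobj f \<psi> (x + d) \<ge> - ereal \<gamma> * quadQ g \<psi> x H d
     \<and> - ereal \<gamma> * quadQ g \<psi> x H d \<ge> 0"

(* A run of Algorithm 2: H0 initial matrices, H the final (accepted) matrices, d accepted directions;
   the inner loop: trial directions dtr 0..m for trial matrices, first m-1 rejected, the m-th accepted *)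
definition alg2_run :: "nat \<Rightarrow> (real^'n \<Rightarrow> real) \<Rightarrow> (real^'n \<Rightarrow> real^'n) \<Rightarrow> (real^'n \<Rightarrow> ereal) \<Rightarrow> real \<Rightarrow> real \<Rightarrow> real
     \<Rightarrow> (nat \<Rightarrow> real^'n) \<Rightarrow> (nat \<Rightarrow> real^'n^'n) \<Rightarrow> (nat \<Rightarrow> real^'n^'n) \<Rightarrow> (nat \<Rightarrow> real^'n) \<Rightarrow> bool" where
  "alg2_run v f g \<psi> \<beta> \<gamma> \<eta> x H0 H d \<longleftrightarrow>
     (v = 1 \<or> v = 2) \<and> 0 < \<beta> \<and> \<beta> < 1 \<and> 0 < \<gamma> \<and> \<gamma> \<le> 1 \<and>
     (\<forall>k. sym_mat (H0 k) \<and> (v = 1 \<longrightarrow> pos_def_mat (H0 k))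
        \<and> (\<exists>(m::nat) (dtr :: nat \<Rightarrow> real^'n).
              (\<forall>j\<le>m. inexact \<eta> g \<psi> (x k) (alg2_trialH v \<beta> (H0 k) j) (dtr j))
            \<and> (\<forall>j<m. \<not> alg2_accept f g \<psi> \<gamma> (x k) (alg2_trialH v \<beta> (H0 k) j) (dtr j))
            \<and> alg2_accept f g \<psi> \<gamma> (x k) (alg2_trialH v \<beta> (H0 k) m) (dtr m)
            \<and> H k = alg2_trialH v \<beta> (H0 k) m \<and> d k = dtr m)
        \<and> x (Suc k) = x k + d k)"

end

theory Submission
  imports Defs
begin

text \<open>Both estimates come from a per-iteration sufficient decrease
  \<open>F(x\<^sub>t\<^sub>+\<^sub>1) + c\<^sub>t |Q\<^sub>t(d\<^sup>t)| \<le> F(x\<^sub>t)\<close>: summing over \<open>t \<le> k\<close> telescopes to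
  \<open>(k + 1) \<cdot> min\<^sub>t c\<^sub>t \<cdot> min\<^sub>t |Q\<^sub>t(d\<^sup>t)| \<le> F(x\<^sub>0) - F\<^sup>*\<close>.
  For Algorithm 2 the decrease, with \<open>c\<^sub>t = \<gamma>\<close>, is literally the acceptance test.
  For Algorithm 1 it is the Armijo condition with \<open>c\<^sub>t = \<gamma> \<alpha>\<^sub>t\<close>: convexity of \<open>\<psi>\<close> bounds
  \<open>Q\<^sub>t\<close> along the segment \<open>[0, d\<^sup>t]\<close> by \<open>s \<Delta>\<^sub>t + s\<^sup>2 a\<^sub>t/2\<close> with \<open>a\<^sub>t = d\<^sup>tH\<^sub>td\<^sup>t\<close>, so
  \<open>\<eta>\<close>-inexactness forces \<open>\<Delta>\<^sub>t \<le> -a\<^sub>t/(1 + \<surd>\<eta>)\<close>, whence \<open>Q\<^sub>t(d\<^sup>t) \<le> 0\<close>.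
  Together with \<open>H\<^sub>t \<succeq> \<sigma> I\<close> and the descent lemma, every step
  \<open>s \<le> 2(1 - \<gamma>)\<sigma>/((1 + \<surd>\<eta>)L)\<close> passes the Armijo test, so backtracking stops with
  \<open>\<alpha>\<^sub>t \<ge> min {1, 2\<beta>(1 - \<gamma>)\<sigma>/((1 + \<surd>\<eta>)L)}\<close>.\<close>

lemma descent_lemma:
  fixes f :: "'a::real_inner \<Rightarrow> real" and g :: "'a \<Rightarrow> 'a"
  assumes grad: "\<And>x. (f has_derivative (\<lambda>h. g x \<bullet> h)) (at x)"
    and lip: "\<And>x y. norm (g x - g y) \<le> L * norm (x - y)"
    and s: "0 \<le> s"
  shows "f (x + s *\<^sub>R d) \<le> f x + s * (g x \<bullet> d) + L / 2 * s\<^sup>2 * (norm d)\<^sup>2"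
proof -
  define \<phi> where "\<phi> t = f (x + t *\<^sub>R d) - t * (g x \<bullet> d) - L / 2 * t\<^sup>2 * (norm d)\<^sup>2" for t
  have \<phi>_deriv: "(\<phi> has_real_derivative (g (x + t *\<^sub>R d) - g x) \<bullet> d - L * t * (norm d)\<^sup>2) (at t)"
    for t
  proof -
    have "((\<lambda>t. f (x + t *\<^sub>R d)) has_derivative (\<lambda>u. g (x + t *\<^sub>R d) \<bullet> (u *\<^sub>R d))) (at t)"
      by (rule has_derivative_compose[OF _ grad]) (auto intro!: derivative_eq_intros)
    then have "((\<lambda>t. f (x + t *\<^sub>R d)) has_real_derivative g (x + t *\<^sub>R d) \<bullet> d) (at t)"
      by (simp add: has_field_derivative_def mult.commute[of _ "g (x + t *\<^sub>R d) \<bullet> d"])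
    then show ?thesis
      unfolding \<phi>_def
      by (auto intro!: derivative_eq_intros simp: inner_diff_left power2_eq_square)
  qed
  have "\<phi> s \<le> \<phi> 0"
  proof (rule DERIV_nonpos_imp_nonincreasing[OF s])
    fix t assume t: "0 \<le> t" "t \<le> s"
    have "(g (x + t *\<^sub>R d) - g x) \<bullet> d \<le> norm (g (x + t *\<^sub>R d) - g x) * norm d"
      by (rule norm_cauchy_schwarz)
    also have "\<dots> \<le> L * norm (t *\<^sub>R d) * norm d"
      using lip[of "x + t *\<^sub>R d" x] by (intro mult_right_mono) auto
    also have "\<dots> = L * t * (norm d)\<^sup>2"
      using t by (simp add: power2_eq_square)
    finally show "\<exists>y. (\<phi> has_real_derivative y) (at t) \<and> y \<le> 0"
      using \<phi>_deriv[of t] by (intro exI[of _ "(g (x + t *\<^sub>R d) - g x) \<bullet> d - L * t * (norm d)\<^sup>2"]) simp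
  qed
  then show ?thesis
    unfolding \<phi>_def by simp
qed

lemma inexact_model_bound:
  fixes a D \<eta> :: real
  assumes a: "0 \<le> a" and eta: "0 \<le> \<eta>" "\<eta> < 1"
    and model: "\<And>t. 0 \<le> t \<Longrightarrow> t \<le> 1 \<Longrightarrow> D + a / 2 \<le> (1 - \<eta>) * (t * D + t\<^sup>2 * a / 2)"
  shows "a / (1 + sqrt \<eta>) \<le> - D"
proof -
  define r where "r = sqrt \<eta>"
  have r: "0 \<le> r" "r < 1" "r\<^sup>2 = \<eta>"
    using eta by (auto simp: r_def)
  have "D + a / 2 \<le> 0"
    using model[of 0] by simp
  then consider "a \<le> - D" | "0 < - D" "- D < a"
    using a by linarith
  then show ?thesis
  proof cases
    case 1
    moreover have "a / (1 + r) \<le> a"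
      using a r by (simp add: divide_le_eq algebra_simps)
    ultimately show ?thesis
      unfolding r_def by linarith
  next
    case 2
    then have "0 < a" by linarith
    \<comment> \<open>Take \<open>t = -D/a\<close>, the minimiser of the right-hand side; the resulting quadratic
      in \<open>-D\<close> has roots \<open>a/(1 \<plusminus> \<surd>\<eta>)\<close>.\<close>
    have "D + a / 2 \<le> - ((1 - \<eta>) * D\<^sup>2 / (2 * a))"
      using model[of "- D / a"] 2 \<open>0 < a\<close> by (simp add: field_simps power2_eq_square)
    then have "(a + (1 - r) * D) * (a + (1 + r) * D) \<le> 0"
      using \<open>0 < a\<close> r(3) by (simp add: field_simps power2_eq_square)
    moreover have "0 < a + (1 - r) * D"
      using 2 mult_nonneg_nonneg[of r "- D"] r by (simp add: algebra_simps)
    ultimately have "a + (1 + r) * D \<le> 0"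
      by (simp add: mult_le_0_iff)
    then show ?thesis
      using r unfolding r_def[symmetric] by (simp add: divide_le_eq algebra_simps)
  qed
qed

lemma backtracking_lower_bound:
  fixes \<beta> c :: real
  assumes \<beta>: "0 < \<beta>" "\<beta> < 1"
    and small: "\<And>s. 0 < s \<Longrightarrow> s \<le> 1 \<Longrightarrow> s \<le> c \<Longrightarrow> P s"
    and first: "\<And>j. j < i \<Longrightarrow> \<not> P (\<beta> ^ j)"
  shows "min 1 (\<beta> * c) \<le> \<beta> ^ i"
proof (cases i)
  case (Suc j)
  have "0 < \<beta> ^ j" "\<beta> ^ j \<le> 1"
    using \<beta> by (auto simp: power_le_one)
  then have "c < \<beta> ^ j"
    using small first[of j] Suc by force
  then show ?thesis
    using \<beta> Suc by (simp add: min.coboundedI2)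
qed simp

lemma one_le_max_inverse_mult:
  fixes u m :: real
  assumes "0 < u" "min 1 u \<le> m"
  shows "1 \<le> max 1 (1 / u) * m"
  using assms by (auto simp: min_def max_def field_simps)

lemma ereal_divide_mult_le:
  fixes A :: ereal
  assumes A: "0 \<le> A" and a: "0 < a" and b: "0 < b" and M: "1 \<le> M * b"
  shows "A / ereal (a * b) \<le> A / ereal a * ereal M"
proof (cases A)
  case (real r)
  have "r / a * (1 / b) \<le> r / a * M"
    using A real a b M by (intro mult_left_mono) (auto simp: divide_le_eq mult.commute)
  then show ?thesis
    using real a b by simp
next
  case PInf
  have "0 < M"
    using M b zero_less_mult_pos2[of M b] by linarith
  then show ?thesis
    using PInf a b by simp
qed (use A in simp)

lemma ereal_add_le_of_le_minus:
  fixes a b c :: ereal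
  assumes "c \<le> a - b" and "0 \<le> c" and "b \<noteq> - \<infinity>"
  shows "b + c \<le> a"
  using assms by (cases a; cases b; cases c) auto

lemma sum_le_of_sufficient_decrease:
  fixes F w :: "nat \<Rightarrow> ereal"
  assumes c: "0 \<le> c"
    and dec: "\<And>t. t \<le> k \<Longrightarrow> F (Suc t) + ereal c * w t \<le> F t"
    and w: "\<And>t. 0 \<le> w t"
  shows "F (Suc k) + ereal c * (\<Sum>t\<le>k. w t) \<le> F 0"
  using dec
proof (induction k)
  case (Suc k)
  have "F (Suc (Suc k)) + ereal c * (\<Sum>t\<le>Suc k. w t)
      = (F (Suc (Suc k)) + ereal c * w (Suc k)) + ereal c * (\<Sum>t\<le>k. w t)"
    by (simp add: ereal_right_distrib w sum_nonneg add.commute add.left_commute)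
  also have "\<dots> \<le> F (Suc k) + ereal c * (\<Sum>t\<le>k. w t)"
    using Suc.prems by (intro add_right_mono) simp
  also have "\<dots> \<le> F 0"
    using Suc by simp
  finally show ?case .
qed simp

lemma Min_le_of_sufficient_decrease:
  fixes F w :: "nat \<Rightarrow> ereal"
  assumes c: "0 < c"
    and dec: "\<And>t. t \<le> k \<Longrightarrow> F (Suc t) + ereal c * w t \<le> F t"
    and w: "\<And>t. 0 \<le> w t"
    and lo: "ereal m \<le> F (Suc k)"
  shows "Min (w ` {..k}) \<le> (F 0 - ereal m) / ereal (c * real (k + 1))"
proof -
  have "ereal (real (k + 1)) * Min (w ` {..k}) = (\<Sum>t\<le>k. Min (w ` {..k}))"
    by (simp add: sum_constant_ereal mult.commute)
  also have "\<dots> \<le> (\<Sum>t\<le>k. w t)"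
    by (intro sum_mono) auto
  finally have "ereal c * (ereal (real (k + 1)) * Min (w ` {..k})) \<le> ereal c * (\<Sum>t\<le>k. w t)"
    using c by (intro ereal_mult_left_mono) auto
  then have "ereal (c * real (k + 1)) * Min (w ` {..k}) + ereal m
      \<le> ereal c * (\<Sum>t\<le>k. w t) + F (Suc k)"
    using lo by (metis add_mono times_ereal.simps(1) mult.assoc)
  also have "\<dots> \<le> F 0"
    using c dec w sum_le_of_sufficient_decrease[of c k F w] by (simp add: add.commute)
  finally show ?thesis
    using c by (simp add: ereal_le_divide_pos ereal_le_minus)
qed

lemma ereal_convex_on_segment:
  assumes convex: "ereal_convex \<psi>" and p0: "\<psi> x = ereal p0" and p1: "\<psi> (x + d) = ereal p1"
    and t: "0 \<le> t" "t \<le> 1"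
  shows "\<psi> (x + t *\<^sub>R d) \<le> ereal ((1 - t) * p0 + t * p1)"
proof -
  have "\<psi> ((1 - t) *\<^sub>R x + t *\<^sub>R (x + d)) \<le> ereal (1 - t) * \<psi> x + ereal t * \<psi> (x + d)"
    using convex t unfolding ereal_convex_def by auto
  moreover have "(1 - t) *\<^sub>R x + t *\<^sub>R (x + d) = x + t *\<^sub>R d"
    by (simp add: algebra_simps)
  ultimately show ?thesis
    using p0 p1 by simp
qed

lemma inexact_direction_model:
  fixes g :: "real^'n \<Rightarrow> real^'n" and \<psi> :: "real^'n \<Rightarrow> ereal"
  assumes proper: "ereal_proper \<psi>" and convex: "ereal_convex \<psi>"
    and p0: "\<psi> x = ereal p0" and inex: "inexact \<eta> g \<psi> x H d"
    and eta: "0 \<le> \<eta>" "\<eta> < 1" and curv: "0 \<le> d \<bullet> (H *v d)"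
  obtains p1 where "\<psi> (x + d) = ereal p1"
    and "quadQ g \<psi> x H d = ereal (g x \<bullet> d + p1 - p0 + d \<bullet> (H *v d) / 2)"
    and "d \<bullet> (H *v d) / (1 + sqrt \<eta>) \<le> - (g x \<bullet> d + p1 - p0)"
proof -
  have inex': "quadQ g \<psi> x H d \<le> ereal (1 - \<eta>) * Qstar g \<psi> x H"
    using inex unfolding inexact_def .
  have Qstar_le: "Qstar g \<psi> x H \<le> quadQ g \<psi> x H e" for e
    unfolding Qstar_def by (rule INF_lower) simp
  have "quadQ g \<psi> x H 0 = 0"
    unfolding quadQ_def using p0 by simp
  then have "ereal (1 - \<eta>) * Qstar g \<psi> x H \<le> ereal (1 - \<eta>) * 0"
    using Qstar_le[of 0] eta by (intro ereal_mult_left_mono) auto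
  then have "\<psi> (x + d) \<noteq> \<infinity>"
    using inex' p0 unfolding quadQ_def by auto
  moreover have "\<psi> (x + d) \<noteq> - \<infinity>"
    using proper unfolding ereal_proper_def by simp
  ultimately obtain p1 where p1: "\<psi> (x + d) = ereal p1"
    by (cases "\<psi> (x + d)") auto
  define D where "D = g x \<bullet> d + p1 - p0"
  define a where "a = d \<bullet> (H *v d)"
  have Q: "quadQ g \<psi> x H d = ereal (D + a / 2)"
    unfolding quadQ_def D_def a_def using p0 p1 by simp
  have "D + a / 2 \<le> (1 - \<eta>) * (t * D + t\<^sup>2 * a / 2)" if t: "0 \<le> t" "t \<le> 1" for t
  proof -
    have "\<psi> (x + t *\<^sub>R d) \<le> ereal ((1 - t) * p0 + t * p1)"
      using ereal_convex_on_segment[OF convex p0 p1 t] .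
    then have "quadQ g \<psi> x H (t *\<^sub>R d) \<le> ereal (t * D + t\<^sup>2 * a / 2)"
      unfolding quadQ_def D_def a_def using p0
      by (cases "\<psi> (x + t *\<^sub>R d)")
        (auto simp: power2_eq_square algebra_simps)
    then have "ereal (1 - \<eta>) * Qstar g \<psi> x H \<le> ereal (1 - \<eta>) * ereal (t * D + t\<^sup>2 * a / 2)"
      using Qstar_le[of "t *\<^sub>R d"] eta by (intro ereal_mult_left_mono) auto
    with inex' Q have "ereal (D + a / 2) \<le> ereal ((1 - \<eta>) * (t * D + t\<^sup>2 * a / 2))"
      by (metis order_trans times_ereal.simps(1))
    then show ?thesis
      by simp
  qed
  then have "a / (1 + sqrt \<eta>) \<le> - D"
    using inexact_model_bound[of a \<eta> D] eta curv unfolding a_def by blast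
  then show ?thesis
    using that p1 Q unfolding D_def a_def by blast
qed

lemma Fstar_finite:
  assumes proper: "ereal_proper \<psi>" and bdd: "\<exists>m::real. \<forall>x. ereal m \<le> Fobj f \<psi> x"
  obtains fs where "Fstar f \<psi> = ereal fs" and "\<And>y. ereal fs \<le> Fobj f \<psi> y"
proof -
  obtain m where m: "\<And>x. ereal m \<le> Fobj f \<psi> x"
    using bdd by blast
  obtain z where "\<psi> z \<noteq> \<infinity>"
    using proper unfolding ereal_proper_def by blast
  then have "Fobj f \<psi> z \<noteq> \<infinity>"
    unfolding Fobj_def by simp
  have le: "Fstar f \<psi> \<le> Fobj f \<psi> y" for y
    unfolding Fstar_def by (rule INF_lower) simp
  have "ereal m \<le> Fstar f \<psi>"
    unfolding Fstar_def using m by (auto intro: Inf_greatest)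
  with le[of z] \<open>Fobj f \<psi> z \<noteq> \<infinity>\<close> obtain fs where "Fstar f \<psi> = ereal fs"
    by (cases "Fstar f \<psi>") auto
  then show ?thesis
    using that le by simp
qed

context
  fixes f :: "real^'n \<Rightarrow> real" and g :: "real^'n \<Rightarrow> real^'n"
    and \<psi> :: "real^'n \<Rightarrow> ereal" and L \<eta> :: real
  assumes L_pos: "L > 0"
    and grad: "\<And>x. (f has_derivative (\<lambda>h. g x \<bullet> h)) (at x)"
    and lip: "\<And>x y. norm (g x - g y) \<le> L * norm (x - y)"
    and convex: "ereal_convex \<psi>" and proper: "ereal_proper \<psi>"
    and eta: "0 \<le> \<eta>" "\<eta> < 1"
begin

lemma armijo_of_small_step:
  assumes p0: "\<psi> x = ereal p0" and p1: "\<psi> (x + d) = ereal p1"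
    and s: "0 < s" "s \<le> 1"
    and small: "L * s / 2 * (norm d)\<^sup>2 \<le> (1 - \<gamma>) * - (g x \<bullet> d + p1 - p0)"
  shows "armijo f g \<psi> \<gamma> x d s"
proof -
  define D where "D = g x \<bullet> d + p1 - p0"
  have "f (x + s *\<^sub>R d) \<le> f x + s * (g x \<bullet> d) + L / 2 * s\<^sup>2 * (norm d)\<^sup>2"
    using descent_lemma[OF grad lip] s by simp
  moreover have "s * (L * s / 2 * (norm d)\<^sup>2) \<le> s * ((1 - \<gamma>) * - D)"
    using small s unfolding D_def by (intro mult_left_mono) auto
  ultimately have real_bound: "f (x + s *\<^sub>R d) + ((1 - s) * p0 + s * p1) \<le> f x + p0 + s * \<gamma> * D"
    unfolding D_def by (simp add: algebra_simps power2_eq_square)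
  have "Fobj f \<psi> (x + s *\<^sub>R d) \<le> ereal (f (x + s *\<^sub>R d)) + ereal ((1 - s) * p0 + s * p1)"
    unfolding Fobj_def using ereal_convex_on_segment[OF convex p0 p1] s by (intro add_left_mono) simp
  also have "\<dots> \<le> ereal (f x + p0 + s * \<gamma> * D)"
    using real_bound by simp
  finally show ?thesis
    unfolding armijo_def Fobj_def Delta_def D_def using p0 p1 by simp
qed

lemma alg1_step_pos:
  assumes run: "alg1_run f g \<psi> \<beta> \<gamma> \<eta> x H d \<alpha>"
  shows "0 < \<alpha> t"
  using run unfolding alg1_run_def by (metis zero_less_power)

lemma alg1_direction_model:
  assumes run: "alg1_run f g \<psi> \<beta> \<gamma> \<eta> x H d \<alpha>"
    and psd: "psd_ge (H t) \<sigma>" and \<sigma>: "0 < \<sigma>" and fin: "\<psi> (x t) \<noteq> \<infinity>"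
  obtains p0 p1 where "\<psi> (x t) = ereal p0" and "\<psi> (x t + d t) = ereal p1"
    and "quadQ g \<psi> (x t) (H t) (d t) = ereal (g (x t) \<bullet> d t + p1 - p0 + d t \<bullet> (H t *v d t) / 2)"
    and "\<sigma> * (norm (d t))\<^sup>2 \<le> d t \<bullet> (H t *v d t)"
    and "d t \<bullet> (H t *v d t) / (1 + sqrt \<eta>) \<le> - (g (x t) \<bullet> d t + p1 - p0)"
proof -
  have inex: "inexact \<eta> g \<psi> (x t) (H t) (d t)"
    using run unfolding alg1_run_def by auto
  obtain p0 where p0: "\<psi> (x t) = ereal p0"
    using fin proper unfolding ereal_proper_def by (cases "\<psi> (x t)") auto
  have curv: "\<sigma> * (norm (d t))\<^sup>2 \<le> d t \<bullet> (H t *v d t)"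
    using psd unfolding psd_ge_def by (simp add: power2_norm_eq_inner)
  moreover have "0 \<le> \<sigma> * (norm (d t))\<^sup>2"
    using \<sigma> by simp
  ultimately have "0 \<le> d t \<bullet> (H t *v d t)"
    by linarith
  then show ?thesis
    using inexact_direction_model[OF proper convex p0 inex eta] that[OF p0 _ _ curv] by blast
qed

lemma alg1_sufficient_decrease:
  assumes run: "alg1_run f g \<psi> \<beta> \<gamma> \<eta> x H d \<alpha>"
    and psd: "psd_ge (H t) \<sigma>" and \<sigma>: "0 < \<sigma>"
  shows "Fobj f \<psi> (x (Suc t)) + ereal (\<gamma> * \<alpha> t) * \<bar>quadQ g \<psi> (x t) (H t) (d t)\<bar>
    \<le> Fobj f \<psi> (x t)"
proof (cases "\<psi> (x t) = \<infinity>")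
  case False
  then obtain p0 p1 where p0: "\<psi> (x t) = ereal p0" and p1: "\<psi> (x t + d t) = ereal p1"
    and Q: "quadQ g \<psi> (x t) (H t) (d t) = ereal (g (x t) \<bullet> d t + p1 - p0 + d t \<bullet> (H t *v d t) / 2)"
    and curv: "\<sigma> * (norm (d t))\<^sup>2 \<le> d t \<bullet> (H t *v d t)"
    and model: "d t \<bullet> (H t *v d t) / (1 + sqrt \<eta>) \<le> - (g (x t) \<bullet> d t + p1 - p0)"
    by (rule alg1_direction_model[OF run psd \<sigma>])
  define D where "D = g (x t) \<bullet> d t + p1 - p0"
  define a where "a = d t \<bullet> (H t *v d t)"
  have "0 < \<gamma>" and "x (Suc t) = x t + \<alpha> t *\<^sub>R d t"
    using run unfolding alg1_run_def by auto
  moreover have "armijo f g \<psi> \<gamma> (x t) (d t) (\<alpha> t)"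
    using run unfolding alg1_run_def by metis
  ultimately have F: "Fobj f \<psi> (x (Suc t)) \<le> ereal (f (x t) + p0 + \<gamma> * \<alpha> t * D)"
    using p0 p1 unfolding armijo_def Delta_def Fobj_def D_def by (simp add: mult.commute)
  have "0 \<le> \<sigma> * (norm (d t))\<^sup>2"
    using \<sigma> by simp
  then have "0 \<le> a"
    using curv unfolding a_def by linarith
  moreover have "a / 2 \<le> a / (1 + sqrt \<eta>)"
    using \<open>0 \<le> a\<close> eta by (intro divide_left_mono mult_pos_pos) (auto simp: add_pos_nonneg)
  ultimately have "D + a / 2 \<le> 0"
    using model unfolding D_def a_def by linarith
  then have "\<gamma> * \<alpha> t * D + \<gamma> * \<alpha> t * - (D + a / 2) \<le> 0"
    using \<open>0 \<le> a\<close> \<open>0 < \<gamma>\<close> alg1_step_pos[OF run, of t] by (simp add: algebra_simps)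
  then show ?thesis
    using F Q p0 \<open>D + a / 2 \<le> 0\<close> unfolding Fobj_def D_def[symmetric] a_def[symmetric]
    by (auto intro: order_trans[OF add_right_mono])
qed (simp add: Fobj_def)

lemma alg1_step_ge_of_finite:
  assumes run: "alg1_run f g \<psi> \<beta> \<gamma> \<eta> x H d \<alpha>"
    and psd: "psd_ge (H t) \<sigma>" and \<sigma>: "0 < \<sigma>" and fin: "\<psi> (x t) \<noteq> \<infinity>"
  shows "min 1 (\<beta> * (2 * (1 - \<gamma>) * \<sigma> / ((1 + sqrt \<eta>) * L))) \<le> \<alpha> t"
proof -
  obtain p0 p1 where p0: "\<psi> (x t) = ereal p0" and p1: "\<psi> (x t + d t) = ereal p1"
    and curv: "\<sigma> * (norm (d t))\<^sup>2 \<le> d t \<bullet> (H t *v d t)"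
    and model: "d t \<bullet> (H t *v d t) / (1 + sqrt \<eta>) \<le> - (g (x t) \<bullet> d t + p1 - p0)"
    by (rule alg1_direction_model[OF run psd \<sigma> fin])
  have \<beta>: "0 < \<beta>" "\<beta> < 1" and \<gamma>: "\<gamma> < 1"
    using run unfolding alg1_run_def by auto
  obtain i where \<alpha>: "\<alpha> t = \<beta> ^ i"
    and first: "\<And>j. j < i \<Longrightarrow> \<not> armijo f g \<psi> \<gamma> (x t) (d t) (\<beta> ^ j)"
    using run unfolding alg1_run_def by blast
  define n where "n = (norm (d t))\<^sup>2"
  define c where "c = 2 * (1 - \<gamma>) * \<sigma> / ((1 + sqrt \<eta>) * L)"
  have "1 + sqrt \<eta> > 0"
    using eta by (simp add: add_pos_nonneg)
  have "armijo f g \<psi> \<gamma> (x t) (d t) s" if s: "0 < s" "s \<le> 1" "s \<le> c" for s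
  proof (rule armijo_of_small_step[OF p0 p1 s(1,2)])
    have "L * s / 2 * n \<le> L * c / 2 * n"
      using s L_pos unfolding n_def by (intro mult_right_mono) auto
    also have "\<dots> = (1 - \<gamma>) * (\<sigma> * n / (1 + sqrt \<eta>))"
      using L_pos \<open>1 + sqrt \<eta> > 0\<close> unfolding c_def by simp (simp add: field_simps)
    also have "\<dots> \<le> (1 - \<gamma>) * - (g (x t) \<bullet> d t + p1 - p0)"
      using curv model \<gamma> \<open>1 + sqrt \<eta> > 0\<close> unfolding n_def
      by (intro mult_left_mono) (auto intro: order_trans[OF divide_right_mono])
    finally show "L * s / 2 * (norm (d t))\<^sup>2 \<le> (1 - \<gamma>) * - (g (x t) \<bullet> d t + p1 - p0)"
      unfolding n_def .
  qed
  then show ?thesis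
    using backtracking_lower_bound[OF \<beta>] first unfolding \<alpha> c_def by blast
qed

lemma alg1_objective_decseq:
  assumes run: "alg1_run f g \<psi> \<beta> \<gamma> \<eta> x H d \<alpha>"
    and \<sigma>: "0 < \<sigma>" and psd: "\<And>t. psd_ge (H t) \<sigma>"
  shows "decseq (\<lambda>t. Fobj f \<psi> (x t))"
proof (rule decseq_SucI)
  fix t
  have "0 < \<gamma>"
    using run unfolding alg1_run_def by simp
  then have "0 \<le> ereal (\<gamma> * \<alpha> t) * \<bar>quadQ g \<psi> (x t) (H t) (d t)\<bar>"
    using alg1_step_pos[OF run, of t] by simp
  then have "Fobj f \<psi> (x (Suc t))
      \<le> Fobj f \<psi> (x (Suc t)) + ereal (\<gamma> * \<alpha> t) * \<bar>quadQ g \<psi> (x t) (H t) (d t)\<bar>"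
    by (rule add_increasing2) simp
  also have "\<dots> \<le> Fobj f \<psi> (x t)"
    by (rule alg1_sufficient_decrease[OF run psd \<sigma>])
  finally show "Fobj f \<psi> (x (Suc t)) \<le> Fobj f \<psi> (x t)" .
qed

lemma alg1_step_lower_bound:
  assumes run: "alg1_run f g \<psi> \<beta> \<gamma> \<eta> x H d \<alpha>"
    and \<sigma>: "0 < \<sigma>" and psd: "\<And>t. psd_ge (H t) \<sigma>"
    and fin: "Fobj f \<psi> (x 0) \<noteq> \<infinity>"
  shows "min 1 (\<beta> * (2 * (1 - \<gamma>) * \<sigma> / ((1 + sqrt \<eta>) * L))) \<le> \<alpha> t"
proof -
  have "Fobj f \<psi> (x t) \<le> Fobj f \<psi> (x 0)"
    using decseqD[OF alg1_objective_decseq[OF run \<sigma> psd], of 0 t] by simp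
  then have "\<psi> (x t) \<noteq> \<infinity>"
    using fin unfolding Fobj_def by auto
  then show ?thesis
    by (rule alg1_step_ge_of_finite[OF run psd \<sigma>])
qed

lemma alg1_rate:
  assumes run: "alg1_run f g \<psi> \<beta> \<gamma> \<eta> x H d \<alpha>"
    and \<sigma>: "0 < \<sigma>" and psd: "\<And>t. psd_ge (H t) \<sigma>"
    and bdd: "\<exists>m::real. \<forall>x. ereal m \<le> Fobj f \<psi> x"
  shows "Min ((\<lambda>t. \<bar>quadQ g \<psi> (x t) (H t) (d t)\<bar>) ` {..k})
      \<le> (Fobj f \<psi> (x 0) - Fstar f \<psi>) / ereal (\<gamma> * real (k + 1) * Min (\<alpha> ` {..k}))"
proof -
  obtain fs where fs: "Fstar f \<psi> = ereal fs" and lo: "\<And>y. ereal fs \<le> Fobj f \<psi> y"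
    using Fstar_finite[OF proper bdd] by blast
  have "0 < \<gamma>"
    using run unfolding alg1_run_def by simp
  define m\<alpha> where "m\<alpha> = Min (\<alpha> ` {..k})"
  have "0 < m\<alpha>"
    unfolding m\<alpha>_def using alg1_step_pos[OF run] by (simp add: Min_gr_iff)
  have "Fobj f \<psi> (x (Suc t)) + ereal (\<gamma> * m\<alpha>) * \<bar>quadQ g \<psi> (x t) (H t) (d t)\<bar>
      \<le> Fobj f \<psi> (x t)" if "t \<le> k" for t
  proof -
    have "m\<alpha> \<le> \<alpha> t"
      unfolding m\<alpha>_def using that by simp
    then have "ereal (\<gamma> * m\<alpha>) * \<bar>quadQ g \<psi> (x t) (H t) (d t)\<bar>
        \<le> ereal (\<gamma> * \<alpha> t) * \<bar>quadQ g \<psi> (x t) (H t) (d t)\<bar>"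
      using \<open>0 < \<gamma>\<close> by (intro ereal_mult_right_mono) auto
    then show ?thesis
      using alg1_sufficient_decrease[OF run psd \<sigma>, of t] by (metis add_left_mono order_trans)
  qed
  then show ?thesis
    using Min_le_of_sufficient_decrease[of "\<gamma> * m\<alpha>" k "\<lambda>t. Fobj f \<psi> (x t)"]
      \<open>0 < \<gamma>\<close> \<open>0 < m\<alpha>\<close> lo fs unfolding m\<alpha>_def[symmetric] by (simp add: mult_ac)
qed

lemma alg1_rate_uniform:
  assumes run: "alg1_run f g \<psi> \<beta> \<gamma> \<eta> x H d \<alpha>"
    and \<sigma>: "0 < \<sigma>" and psd: "\<And>t. psd_ge (H t) \<sigma>"
    and bdd: "\<exists>m::real. \<forall>x. ereal m \<le> Fobj f \<psi> x"
  shows "(Fobj f \<psi> (x 0) - Fstar f \<psi>) / ereal (\<gamma> * real (k + 1) * Min (\<alpha> ` {..k}))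
      \<le> (Fobj f \<psi> (x 0) - Fstar f \<psi>) / ereal (\<gamma> * real (k + 1))
        * ereal (max 1 ((1 + sqrt \<eta>) * L / (2 * \<beta> * (1 - \<gamma>) * \<sigma>)))"
proof -
  obtain fs where fs: "Fstar f \<psi> = ereal fs" and lo: "\<And>y. ereal fs \<le> Fobj f \<psi> y"
    using Fstar_finite[OF proper bdd] by blast
  have \<beta>: "0 < \<beta>" and \<gamma>: "0 < \<gamma>" "\<gamma> < 1"
    using run unfolding alg1_run_def by auto
  define m\<alpha> where "m\<alpha> = Min (\<alpha> ` {..k})"
  have "0 < m\<alpha>"
    unfolding m\<alpha>_def using alg1_step_pos[OF run] by (simp add: Min_gr_iff)
  define M where "M = max 1 ((1 + sqrt \<eta>) * L / (2 * \<beta> * (1 - \<gamma>) * \<sigma>))"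
  show ?thesis
    unfolding m\<alpha>_def[symmetric] M_def[symmetric]
  proof (cases "Fobj f \<psi> (x 0) = \<infinity>")
    case True
    have "0 < M"
      unfolding M_def by linarith
    then show "(Fobj f \<psi> (x 0) - Fstar f \<psi>) / ereal (\<gamma> * real (k + 1) * m\<alpha>)
        \<le> (Fobj f \<psi> (x 0) - Fstar f \<psi>) / ereal (\<gamma> * real (k + 1)) * ereal M"
      using True fs \<gamma> \<open>0 < m\<alpha>\<close> by simp
  next
    case False
    define u where "u = \<beta> * (2 * (1 - \<gamma>) * \<sigma> / ((1 + sqrt \<eta>) * L))"
    have "0 < u"
      unfolding u_def using \<beta> \<gamma> \<sigma> L_pos eta by (simp add: add_pos_nonneg)
    have "min 1 u \<le> m\<alpha>"
      unfolding m\<alpha>_def u_def using alg1_step_lower_bound[OF run \<sigma> psd False] by simp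
    then have "1 \<le> max 1 (1 / u) * m\<alpha>"
      by (rule one_le_max_inverse_mult[OF \<open>0 < u\<close>])
    moreover have "1 / u = (1 + sqrt \<eta>) * L / (2 * \<beta> * (1 - \<gamma>) * \<sigma>)"
      unfolding u_def by (simp add: field_simps)
    moreover have "0 \<le> Fobj f \<psi> (x 0) - Fstar f \<psi>"
      using lo[of "x 0"] fs by (simp add: ereal_diff_positive)
    ultimately show "(Fobj f \<psi> (x 0) - Fstar f \<psi>) / ereal (\<gamma> * real (k + 1) * m\<alpha>)
        \<le> (Fobj f \<psi> (x 0) - Fstar f \<psi>) / ereal (\<gamma> * real (k + 1)) * ereal M"
      unfolding M_def using \<gamma> \<open>0 < m\<alpha>\<close> by (intro ereal_divide_mult_le) simp_all
  qed
qed

end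

lemma alg2_sufficient_decrease:
  assumes run: "alg2_run v f g \<psi> \<beta> \<gamma> \<eta> x H0 H d"
    and finite_below: "\<And>y. Fobj f \<psi> y \<noteq> - \<infinity>"
  shows "Fobj f \<psi> (x (Suc t)) + ereal \<gamma> * \<bar>quadQ g \<psi> (x t) (H t) (d t)\<bar> \<le> Fobj f \<psi> (x t)"
proof -
  have "0 < \<gamma>" and "alg2_accept f g \<psi> \<gamma> (x t) (H t) (d t)" and "x (Suc t) = x t + d t"
    using run unfolding alg2_run_def by metis+
  then have dec: "- ereal \<gamma> * quadQ g \<psi> (x t) (H t) (d t) \<le> Fobj f \<psi> (x t) - Fobj f \<psi> (x (Suc t))"
    and nonneg: "0 \<le> - ereal \<gamma> * quadQ g \<psi> (x t) (H t) (d t)"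
    unfolding alg2_accept_def by auto
  then have "ereal \<gamma> * \<bar>quadQ g \<psi> (x t) (H t) (d t)\<bar> = - ereal \<gamma> * quadQ g \<psi> (x t) (H t) (d t)"
    using \<open>0 < \<gamma>\<close> by (cases "quadQ g \<psi> (x t) (H t) (d t)") (auto simp: mult_le_0_iff)
  then show ?thesis
    using ereal_add_le_of_le_minus[OF dec nonneg finite_below] by simp
qed

lemma alg2_rate:
  assumes run: "alg2_run v f g \<psi> \<beta> \<gamma> \<eta> x H0 H d"
    and proper: "ereal_proper \<psi>" and bdd: "\<exists>m::real. \<forall>x. ereal m \<le> Fobj f \<psi> x"
  shows "Min ((\<lambda>t. \<bar>quadQ g \<psi> (x t) (H t) (d t)\<bar>) ` {..k})
      \<le> (Fobj f \<psi> (x 0) - Fstar f \<psi>) / ereal (\<gamma> * real (k + 1))"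
proof -
  obtain fs where fs: "Fstar f \<psi> = ereal fs" and lo: "\<And>y. ereal fs \<le> Fobj f \<psi> y"
    using Fstar_finite[OF proper bdd] by blast
  have "0 < \<gamma>"
    using run unfolding alg2_run_def by auto
  moreover have "Fobj f \<psi> y \<noteq> - \<infinity>" for y
    using lo[of y] by auto
  ultimately show ?thesis
    using Min_le_of_sufficient_decrease[of \<gamma> k "\<lambda>t. Fobj f \<psi> (x t)"]
      alg2_sufficient_decrease[OF run] lo fs by simp
qed

theorem lemma8:
  fixes f :: "real^'n \<Rightarrow> real" and g :: "real^'n \<Rightarrow> real^'n"
    and \<psi> :: "real^'n \<Rightarrow> ereal" and L \<eta> :: real
  assumes L_pos: "L > 0"
    and grad: "\<And>x. (f has_derivative (\<lambda>h. g x \<bullet> h)) (at x)"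
    and lip: "\<And>x y. norm (g x - g y) \<le> L * norm (x - y)"
    and psi_convex: "ereal_convex \<psi>" and psi_proper: "ereal_proper \<psi>"
    and psi_closed: "ereal_closed_fun \<psi>"
    and F_bdd: "\<exists>m::real. \<forall>x. ereal m \<le> Fobj f \<psi> x"
    and Omega_ne: "\<exists>x. Fobj f \<psi> x = Fstar f \<psi>"
    and eta: "0 \<le> \<eta>" "\<eta> < 1"
  shows
    "(\<forall>\<beta> \<gamma> \<sigma> x H d \<alpha>.
        alg1_run f g \<psi> \<beta> \<gamma> \<eta> x H d \<alpha> \<and> \<sigma> > 0 \<and> (\<forall>k. psd_ge (H k) \<sigma>) \<longrightarrow>
        (\<forall>k. Min ((\<lambda>t. \<bar>quadQ g \<psi> (x t) (H t) (d t)\<bar>) ` {..k})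
               \<le> (Fobj f \<psi> (x 0) - Fstar f \<psi>) / ereal (\<gamma> * real (k + 1) * Min (\<alpha> ` {..k}))
           \<and> (Fobj f \<psi> (x 0) - Fstar f \<psi>) / ereal (\<gamma> * real (k + 1) * Min (\<alpha> ` {..k}))
               \<le> (Fobj f \<psi> (x 0) - Fstar f \<psi>) / ereal (\<gamma> * real (k + 1))
                  * ereal (max 1 ((1 + sqrt \<eta>) * L / (2 * \<beta> * (1 - \<gamma>) * \<sigma>)))))
     \<and> (\<forall>v \<beta> \<gamma> x H0 H d.
        alg2_run v f g \<psi> \<beta> \<gamma> \<eta> x H0 H d \<longrightarrow>
        (\<forall>k. Min ((\<lambda>t. \<bar>quadQ g \<psi> (x t) (H t) (d t)\<bar>) ` {..k})
               \<le> (Fobj f \<psi> (x 0) - Fstar f \<psi>) / ereal (\<gamma> * real (k + 1))))"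
proof (intro conjI allI impI)
  fix \<beta> \<gamma> \<sigma> x H d \<alpha> k
  assume "alg1_run f g \<psi> \<beta> \<gamma> \<eta> x H d \<alpha> \<and> \<sigma> > 0 \<and> (\<forall>k. psd_ge (H k) \<sigma>)"
  then have run: "alg1_run f g \<psi> \<beta> \<gamma> \<eta> x H d \<alpha>" and \<sigma>: "\<sigma> > 0" and psd: "\<And>k. psd_ge (H k) \<sigma>"
    by auto
  show "Min ((\<lambda>t. \<bar>quadQ g \<psi> (x t) (H t) (d t)\<bar>) ` {..k})
      \<le> (Fobj f \<psi> (x 0) - Fstar f \<psi>) / ereal (\<gamma> * real (k + 1) * Min (\<alpha> ` {..k}))"
    by (rule alg1_rate[OF L_pos grad lip psi_convex psi_proper eta run \<sigma> psd F_bdd])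
  show "(Fobj f \<psi> (x 0) - Fstar f \<psi>) / ereal (\<gamma> * real (k + 1) * Min (\<alpha> ` {..k}))
      \<le> (Fobj f \<psi> (x 0) - Fstar f \<psi>) / ereal (\<gamma> * real (k + 1))
        * ereal (max 1 ((1 + sqrt \<eta>) * L / (2 * \<beta> * (1 - \<gamma>) * \<sigma>)))"
    by (rule alg1_rate_uniform[OF L_pos grad lip psi_convex psi_proper eta run \<sigma> psd F_bdd])
next
  fix v \<beta> \<gamma> x H0 H d k
  assume "alg2_run v f g \<psi> \<beta> \<gamma> \<eta> x H0 H d"
  then show "Min ((\<lambda>t. \<bar>quadQ g \<psi> (x t) (H t) (d t)\<bar>) ` {..k})
      \<le> (Fobj f \<psi> (x 0) - Fstar f \<psi>) / ereal (\<gamma> * real (k + 1))"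
    by (rule alg2_rate[OF _ psi_proper F_bdd])
qed

end
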